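(* Let $s,t,r$ be nonnegative integers with $s>t$. Then \[ \sum_{D \in \mathcal{D}_{s,t}^{(r)}} q^{\mathrm{vmr}(D)} = q^{\binom{r+1}{2}}\begin{bmatrix}s+t\\ s+r\end{bmatrix}_q. \]
   Context: A ballot path from $(0,0)$ to $(s+t,s-t)$ is a sequence of lattice points $v_0=(0,0),v_1,\ldots,v_{s+t}=(s+t,s-t)$ with each step $v_i-v_{i-1}\in\{(1,1),(1,-1)\}$ that never goes below the $x$-axis. A point $v_i$ ($0<i<s+t$) is a valley if $v_i-v_{i-1}=(1,-1)$ and $v_{i+1}-v_i=(1,1)$; a valley lying on the $x$-axis is a return. Each return may independently be marked or not; a marked ballot path is a ballot path together with a choice of which of its returns are marked. $\mathcal{D}_{s,t}^{(r)}$ is the set of marked ballot paths from $(0,0)$ to $(s+t,s-t)$ with at least $r$ marked returns. For such $D$, $\mathrm{maj}(D)$ is the sum of the $x$-coordinates of all valleys of $D$, and $\mathrm{vmr}(D)=\mathrm{maj}(D)-\frac12\sum x_i$, where the last sum runs over the $x$-coordinates $x_i$ of the marked returns of $D$. Notation: $(a;q)_n=(1-a)\cdots(1-aq^{n-1})$ and $\begin{bmatrix}n\\k\end{bmatrix}_q=\frac{(q;q)_n}{(q;q)_k(q;q)_{n-k}}$ for $n\ge k\ge0$, $0$ otherwise. *)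

theory Defs
  imports Complex_Main
begin

text \<open>A lattice path of up/down steps is a list of booleans: True = step (1,1),
  False = step (1,-1).  Step number i (1-based) is xs ! (i-1).
  The point v_i has x-coordinate i and y-coordinate path_height xs i.\<close>

definition path_height :: "bool list \<Rightarrow> nat \<Rightarrow> int" where
  "path_height xs i = int (length (filter id (take i xs))) - int (length (filter Not (take i xs)))"

definition ballot_path :: "nat \<Rightarrow> nat \<Rightarrow> bool list \<Rightarrow> bool" where
  "ballot_path s t xs \<longleftrightarrow> length xs = s + t \<and> path_height xs (s + t) = int s - int t
     \<and> (\<forall>i \<le> length xs. 0 \<le> path_height xs i)"

definition valleys :: "bool list \<Rightarrow> nat set" where
  "valleys xs = {i. 0 < i \<and> i < length xs \<and> \<not> xs ! (i - 1) \<and> xs ! i}"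

definition returns :: "bool list \<Rightarrow> nat set" where
  "returns xs = {i \<in> valleys xs. path_height xs i = 0}"

text \<open>Marked ballot paths: a path together with the set of x-coordinates of its marked returns;
  D_{s,t}^{(r)} requires at least r marked returns.\<close>
definition marked_paths :: "nat \<Rightarrow> nat \<Rightarrow> nat \<Rightarrow> (bool list \<times> nat set) set" where
  "marked_paths s t r = {(xs, M). ballot_path s t xs \<and> M \<subseteq> returns xs \<and> r \<le> card M}"

definition maj :: "bool list \<Rightarrow> nat" where
  "maj xs = (\<Sum>i\<in>valleys xs. i)"

text \<open>vmr(D) = maj(D) - 1/2 * sum of x-coordinates of marked returns.  Returns lie on the
  x-axis and hence have even x-coordinate, so x div 2 = x/2 exactly.\<close>
definition vmr :: "bool list \<times> nat set \<Rightarrow> int" where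
  "vmr D = int (maj (fst D)) - int (\<Sum>x\<in>snd D. x div 2)"

definition qpoch :: "'a::comm_ring_1 \<Rightarrow> 'a \<Rightarrow> nat \<Rightarrow> 'a" where
  "qpoch a q n = (\<Prod>i<n. 1 - a * q ^ i)"

definition qbinom :: "'a::field \<Rightarrow> nat \<Rightarrow> nat \<Rightarrow> 'a" where
  "qbinom q n k = (if k \<le> n then qpoch q q n / (qpoch q q k * qpoch q q (n - k)) else 0)"

end

theory Submission
  imports Defs
begin

text \<open>Split a path according to its last steps.  Appending an up step to a path of length \<open>n\<close>
  that ends with a down step creates a valley at \<open>x = n\<close>, multiplying the weight by \<open>q\<^sup>n\<close>; if the
  path ends on the axis, the valley is a return, and marking it replaces \<open>q\<^sup>n\<close> by \<open>q\<^bsup>n/2\<^esup>\<close>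
  and uses up one of the \<open>r\<close> required marks.  For the left-hand side \<open>F(s,t,r)\<close> this gives
  \<open>F(s+1,t+1,r) = F(s,t+1,r) + F(s+1,t,r) + (q\<^bsup>s+t+1\<^esup> - 1) F(s,t,r)\<close> for \<open>t + 1 < s\<close>,
  \<open>F(u+2,u+1,r) = q\<^bsup>2u+2\<^esup> F(u+1,u,r) + q\<^bsup>u+1\<^esup> F(u+1,u,r-1) + F(u+2,u,r)\<close> next to the diagonal, and
  \<open>F(s,0,r) = [r = 0]\<close>.  The right-hand side satisfies the same recurrences by the two
  q-Pascal rules and the absorption identity for q-binomial coefficients.\<close>

section \<open>q-binomial coefficients\<close>

lemma qpoch_q_0 [simp]: "qpoch q q 0 = 1"
  by (simp add: qpoch_def)

lemma qpoch_q_Suc: "qpoch q q (Suc n) = qpoch q q n * (1 - q ^ Suc n)"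
  by (simp add: qpoch_def)

lemma qpoch_q_nonzero:
  fixes q :: "'a::field"
  assumes "\<forall>n>0. q ^ n \<noteq> 1"
  shows "qpoch q q n \<noteq> 0"
  using assms by (induction n) (auto simp: qpoch_q_Suc)

lemma qbinom_eq_qpoch: "qbinom q (k + d) k = qpoch q q (k + d) / (qpoch q q k * qpoch q q d)"
  by (simp add: qbinom_def)

lemma qbinom_eq_0: "n < k \<Longrightarrow> qbinom q n k = 0"
  by (simp add: qbinom_def)

lemma qbinom_diag:
  fixes q :: "'a::field"
  assumes "\<forall>n>0. q ^ n \<noteq> 1"
  shows "qbinom q n n = 1"
  using qpoch_q_nonzero[OF assms] by (simp add: qbinom_def)

lemma qbinom_symmetric: "k \<le> n \<Longrightarrow> qbinom q n (n - k) = qbinom q n k"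
  by (simp add: qbinom_def mult.commute)

lemma qbinom_pascal:
  fixes q :: "'a::field"
  assumes q: "\<forall>n>0. q ^ n \<noteq> 1"
  shows "qbinom q (Suc n) (Suc k) = qbinom q n k + q ^ Suc k * qbinom q n (Suc k)"
proof (cases "k < n")
  case True
  then obtain d where n: "n = k + Suc d" by (metis add_Suc_right less_imp_Suc_add)
  have binoms: "qbinom q (Suc n) (Suc k) = qpoch q q (Suc n) / (qpoch q q (Suc k) * qpoch q q (Suc d))"
    "qbinom q n k = qpoch q q n / (qpoch q q k * qpoch q q (Suc d))"
    "qbinom q n (Suc k) = qpoch q q n / (qpoch q q (Suc k) * qpoch q q d)"
    using qbinom_eq_qpoch[of q "Suc k" "Suc d"] qbinom_eq_qpoch[of q k "Suc d"]
      qbinom_eq_qpoch[of q "Suc k" d] by (simp_all add: n)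
  define a b where "a = q ^ Suc k" and "b = q ^ Suc d"
  have "q ^ Suc n = a * b"
    by (simp add: n a_def b_def power_add[symmetric])
  moreover have "qpoch q q k \<noteq> 0" "qpoch q q d \<noteq> 0" "1 - a \<noteq> 0" "1 - b \<noteq> 0"
    using qpoch_q_nonzero[OF q] q by (auto simp: a_def b_def)
  ultimately show ?thesis
    unfolding binoms qpoch_q_Suc a_def[symmetric] b_def[symmetric]
    by (simp add: divide_simps) (simp add: algebra_simps)
next
  case False
  then consider "k = n" | "n < k" by linarith
  then show ?thesis
  proof cases
    case 1
    then show ?thesis using qbinom_diag[OF q] by (simp add: qbinom_eq_0)
  next
    case 2
    then show ?thesis by (simp add: qbinom_eq_0)
  qed
qed

lemma qbinom_pascal':
  fixes q :: "'a::field"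
  assumes q: "\<forall>n>0. q ^ n \<noteq> 1" and "k \<le> n"
  shows "qbinom q (Suc n) (Suc k) = q ^ (n - k) * qbinom q n k + qbinom q n (Suc k)"
proof (cases "k = n")
  case True
  then show ?thesis using qbinom_diag[OF q] by (simp add: qbinom_eq_0)
next
  case False
  then obtain j where n: "n = k + Suc j" using \<open>k \<le> n\<close> by (metis add_Suc_right le_neq_implies_less less_imp_Suc_add)
  have "qbinom q (Suc n) (Suc k) = qbinom q (Suc n) (Suc j)"
    using qbinom_symmetric[of "Suc k" "Suc n" q] by (simp add: n)
  also have "\<dots> = qbinom q n j + q ^ Suc j * qbinom q n (Suc j)"
    by (rule qbinom_pascal[OF q])
  also have "\<dots> = q ^ (n - k) * qbinom q n k + qbinom q n (Suc k)"
    using qbinom_symmetric[of "Suc k" n q] qbinom_symmetric[of k n q] by (simp add: n)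
  finally show ?thesis .
qed

lemma qbinom_absorb:
  fixes q :: "'a::field"
  assumes q: "\<forall>n>0. q ^ n \<noteq> 1"
  shows "(1 - q ^ Suc k) * qbinom q (Suc n) (Suc k) = (1 - q ^ Suc n) * qbinom q n k"
proof (cases "k \<le> n")
  case True
  then obtain d where n: "n = k + d" using le_Suc_ex by blast
  have binoms: "qbinom q (Suc n) (Suc k) = qpoch q q (Suc n) / (qpoch q q (Suc k) * qpoch q q d)"
    "qbinom q n k = qpoch q q n / (qpoch q q k * qpoch q q d)"
    using qbinom_eq_qpoch[of q "Suc k" d] qbinom_eq_qpoch[of q k d] by (simp_all add: n)
  have "qpoch q q k \<noteq> 0" "qpoch q q d \<noteq> 0" "1 - q ^ Suc k \<noteq> 0"
    using qpoch_q_nonzero[OF q] q by auto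
  then show ?thesis unfolding binoms qpoch_q_Suc by (simp add: field_simps)
qed (simp add: qbinom_eq_0)

definition ballot_formula :: "'a::field \<Rightarrow> nat \<Rightarrow> nat \<Rightarrow> nat \<Rightarrow> 'a" where
  "ballot_formula q s t r = q ^ ((r + 1) choose 2) * qbinom q (s + t) (s + r)"

lemma ballot_formula_right_0:
  fixes q :: "'a::field"
  assumes "\<forall>n>0. q ^ n \<noteq> 1"
  shows "ballot_formula q s 0 r = (if r = 0 then 1 else 0)"
  using qbinom_diag[OF assms] by (simp add: ballot_formula_def qbinom_eq_0 numeral_2_eq_2)

lemma ballot_formula_rec:
  fixes q :: "'a::field"
  assumes q: "\<forall>n>0. q ^ n \<noteq> 1"
  shows "ballot_formula q (Suc s) (Suc t) r
    = ballot_formula q s (Suc t) r + (q ^ (s + Suc t) - 1) * ballot_formula q s t r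
      + ballot_formula q (Suc s) t r"
proof -
  have "qbinom q (Suc (Suc (s + t))) (Suc (s + r))
      = qbinom q (Suc (s + t)) (s + r) + q ^ Suc (s + r) * qbinom q (Suc (s + t)) (Suc (s + r))"
    by (rule qbinom_pascal[OF q])
  also have "\<dots> = qbinom q (Suc (s + t)) (s + r) + (q ^ Suc (s + t) - 1) * qbinom q (s + t) (s + r)
      + qbinom q (Suc (s + t)) (Suc (s + r))"
    using qbinom_absorb[OF q, of "s + r" "s + t"] by (simp add: algebra_simps)
  finally have "qbinom q (Suc (Suc (s + t))) (Suc (s + r))
      = qbinom q (Suc (s + t)) (s + r) + (q ^ Suc (s + t) - 1) * qbinom q (s + t) (s + r)
      + qbinom q (Suc (s + t)) (Suc (s + r))" .
  from arg_cong[OF this, of "(*) (q ^ ((r + 1) choose 2))"] show ?thesis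
    by (simp add: ballot_formula_def algebra_simps)
qed

lemma ballot_formula_rec_diagonal:
  fixes q :: "'a::field"
  assumes q: "\<forall>n>0. q ^ n \<noteq> 1"
  shows "ballot_formula q (Suc (Suc u)) (Suc u) r
    = q ^ (2 * Suc u) * ballot_formula q (Suc u) u r
      + q ^ Suc u * ballot_formula q (Suc u) u (r - 1) + ballot_formula q (Suc (Suc u)) u r"
proof (cases "r \<le> Suc u")
  case True
  define N k where "N = Suc (2 * u)" and "k = Suc (u + r)"
  have "qbinom q (Suc (Suc N)) (Suc k) = q ^ (Suc N - k) * qbinom q (Suc N) k + qbinom q (Suc N) (Suc k)"
    using qbinom_pascal'[OF q, of k "Suc N"] True by (simp add: N_def k_def)
  also have "qbinom q (Suc N) k = qbinom q N (u + r) + q ^ k * qbinom q N k"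
    using qbinom_pascal[OF q, of N "u + r"] by (simp add: k_def)
  finally have pascal: "qbinom q (Suc (Suc N)) (Suc k)
      = q ^ (Suc u - r) * qbinom q N (u + r) + q ^ (2 * Suc u) * qbinom q N k + qbinom q (Suc N) (Suc k)"
    using True by (simp add: N_def k_def algebra_simps power_add[symmetric] mult_2_right)
  have shifted: "q ^ ((r + 1) choose 2) * q ^ (Suc u - r) * qbinom q N (u + r)
      = q ^ Suc u * ballot_formula q (Suc u) u (r - 1)"
  proof (cases r)
    case 0
    then show ?thesis
      using qbinom_symmetric[of "Suc u" N q] by (simp add: ballot_formula_def N_def mult_2)
  next
    case (Suc r')
    have "(r + 1) choose 2 = ((r' + 1) choose 2) + r"
      by (simp add: Suc numeral_2_eq_2)
    then have "q ^ ((r + 1) choose 2) * q ^ (Suc u - r) = q ^ Suc u * q ^ ((r' + 1) choose 2)"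
      using True by (simp add: Suc power_add[symmetric] add.commute)
    then show ?thesis
      by (simp add: ballot_formula_def N_def Suc mult_2)
  qed
  have "ballot_formula q (Suc (Suc u)) (Suc u) r = q ^ ((r + 1) choose 2) * qbinom q (Suc (Suc N)) (Suc k)"
    "ballot_formula q (Suc u) u r = q ^ ((r + 1) choose 2) * qbinom q N k"
    "ballot_formula q (Suc (Suc u)) u r = q ^ ((r + 1) choose 2) * qbinom q (Suc N) (Suc k)"
    by (simp_all add: ballot_formula_def N_def k_def mult_2)
  then show ?thesis
    unfolding pascal shifted[symmetric] by (simp add: algebra_simps)
next
  case False
  then show ?thesis by (simp add: ballot_formula_def qbinom_eq_0)
qed

section \<open>Ballot paths\<close>

lemma path_height_append: "i \<le> length xs \<Longrightarrow> path_height (xs @ ys) i = path_height xs i"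
  by (simp add: path_height_def)

lemma path_height_snoc:
  "path_height (xs @ [b]) (length (xs @ [b])) = path_height xs (length xs) + (if b then 1 else -1)"
  by (simp add: path_height_def)

lemma nonneg_heights_snoc:
  "(\<forall>i \<le> length (xs @ [b]). 0 \<le> path_height (xs @ [b]) i) \<longleftrightarrow>
   (\<forall>i \<le> length xs. 0 \<le> path_height xs i) \<and> 0 \<le> path_height (xs @ [b]) (length (xs @ [b]))"
  by (auto simp: le_Suc_eq path_height_append)

lemma ballot_path_iff:
  "ballot_path s t xs \<longleftrightarrow> length xs = s + t \<and> path_height xs (length xs) = int s - int t
     \<and> (\<forall>i \<le> length xs. 0 \<le> path_height xs i)"
  by (auto simp: ballot_path_def)

lemma ballot_path_snoc_True: "ballot_path (Suc s) t (xs @ [True]) \<longleftrightarrow> ballot_path s t xs"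
  unfolding ballot_path_iff nonneg_heights_snoc path_height_snoc by auto

lemma ballot_path_snoc_False: "ballot_path s (Suc t) (xs @ [False]) \<longleftrightarrow> ballot_path s t xs \<and> t < s"
  unfolding ballot_path_iff nonneg_heights_snoc path_height_snoc by auto

lemma ballot_path_height_snoc_False:
  assumes "ballot_path s t xs"
  shows "path_height (xs @ [False]) (Suc (length xs)) = int s - int t - 1"
proof -
  have "path_height xs (length xs) = int s - int t"
    using assms by (auto simp: ballot_path_def)
  then show ?thesis
    using path_height_snoc[of xs False] by simp
qed

lemma ballot_path_right_0: "ballot_path s 0 xs \<longleftrightarrow> xs = replicate s True"
proof
  assume xs: "ballot_path s 0 xs"
  then have "length (filter id xs) = s + length (filter Not xs)"
    unfolding ballot_path_iff path_height_def by simp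
  moreover have "length (filter id xs) + length (filter Not xs) = length xs"
    using sum_length_filter_compl[of id xs] by (simp add: comp_def)
  ultimately have "filter Not xs = []" and "length xs = s"
    using xs by (auto simp: ballot_path_def)
  then show "xs = replicate s True"
    by (metis (full_types) filter_empty_conv replicate_eqI)
next
  assume "xs = replicate s True"
  then show "ballot_path s 0 xs"
    by (simp add: ballot_path_def path_height_def take_replicate)
qed

definition ballot_paths :: "nat \<Rightarrow> nat \<Rightarrow> bool list set" where
  "ballot_paths s t = {xs. ballot_path s t xs}"

lemma finite_ballot_paths: "finite (ballot_paths s t)"
proof (rule finite_subset)
  show "ballot_paths s t \<subseteq> {xs. set xs \<subseteq> UNIV \<and> length xs = s + t}"
    by (auto simp: ballot_paths_def ballot_path_def)
qed (rule finite_lists_length_eq, simp)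

lemma ballot_paths_empty: "s < t \<Longrightarrow> ballot_paths s t = {}"
  by (force simp: ballot_paths_def ballot_path_def)

lemma ballot_paths_snoc_True: "{xs. xs @ [True] \<in> ballot_paths (Suc s) t} = ballot_paths s t"
  by (simp add: ballot_paths_def ballot_path_snoc_True)

lemma ballot_paths_snoc_False:
  "{xs. xs @ [False] \<in> ballot_paths s (Suc t)} = (if t < s then ballot_paths s t else {})"
  by (simp add: ballot_paths_def ballot_path_snoc_False)

lemma Nil_notin_ballot_paths: "0 < s + t \<Longrightarrow> [] \<notin> ballot_paths s t"
  by (auto simp: ballot_paths_def ballot_path_def)

lemma sum_split_last:
  assumes "finite A" "[] \<notin> A"
  shows "sum f A = (\<Sum>xs | xs @ [True] \<in> A. f (xs @ [True])) + (\<Sum>xs | xs @ [False] \<in> A. f (xs @ [False]))"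
proof -
  let ?snoc = "\<lambda>b xs. xs @ [b]"
  let ?T = "?snoc True ` {xs. xs @ [True] \<in> A}" and ?F = "?snoc False ` {xs. xs @ [False] \<in> A}"
  have A: "A = ?T \<union> ?F"
  proof (intro equalityI subsetI)
    fix zs assume "zs \<in> A"
    moreover from this have "zs \<noteq> []" using assms(2) by auto
    then have "zs = ?snoc (last zs) (butlast zs)" by simp
    ultimately have "zs \<in> ?snoc (last zs) ` {xs. xs @ [last zs] \<in> A}"
      by (intro rev_image_eqI[of "butlast zs"]) simp_all
    then show "zs \<in> ?T \<union> ?F"
      by (cases "last zs") simp_all
  qed auto
  have "finite ?T" "finite ?F"
    by (rule finite_subset[OF _ assms(1)], blast)+
  then have "sum f A = sum f ?T + sum f ?F"
    by (subst A, intro sum.union_disjoint) auto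
  then show ?thesis
    by (simp add: sum.reindex inj_on_def)
qed

section \<open>Valleys, returns and markings\<close>

lemma valleys_subset: "valleys xs \<subseteq> {..<length xs}"
  by (auto simp: valleys_def)

lemma finite_valleys: "finite (valleys xs)"
  using valleys_subset finite_subset by blast

lemma returns_subset_valleys: "returns xs \<subseteq> valleys xs"
  by (auto simp: returns_def)

lemma finite_returns: "finite (returns xs)"
  using returns_subset_valleys finite_valleys finite_subset by blast

lemma valleys_replicate_True: "valleys (replicate n True) = {}"
  by (auto simp: valleys_def)

lemma valleys_snoc_False: "valleys (xs @ [False]) = valleys xs"
  by (auto simp: valleys_def nth_append)

lemma valleys_snoc_True_True: "valleys (xs @ [True, True]) = valleys (xs @ [True])"
  by (auto simp: valleys_def nth_append less_Suc_eq)

lemma valleys_snoc_False_True: "valleys (xs @ [False, True]) = insert (Suc (length xs)) (valleys xs)"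
  by (auto simp: valleys_def nth_append less_Suc_eq)

lemma path_height_append_valley:
  "i \<in> valleys xs \<Longrightarrow> path_height (xs @ ys) i = path_height xs i"
  using valleys_subset[of xs] by (intro path_height_append) auto

lemma returns_snoc_False: "returns (xs @ [False]) = returns xs"
  by (auto simp: returns_def valleys_snoc_False path_height_append_valley)

lemma returns_snoc_True_True: "returns (xs @ [True, True]) = returns (xs @ [True])"
  using path_height_append_valley[of _ "xs @ [True]" "[True]"]
  by (auto simp: returns_def valleys_snoc_True_True)

lemma returns_snoc_False_True:
  "returns (xs @ [False, True]) = returns xs \<union>
     (if path_height (xs @ [False]) (Suc (length xs)) = 0 then {Suc (length xs)} else {})"
proof -
  have "path_height (xs @ [False, True]) (Suc (length xs)) = path_height (xs @ [False]) (Suc (length xs))"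
    using path_height_append[of "Suc (length xs)" "xs @ [False]" "[True]"] by simp
  moreover have "path_height (xs @ [False, True]) i = path_height xs i" if "i \<in> valleys xs" for i
    using path_height_append_valley[OF that, of "[False, True]"] .
  ultimately show ?thesis
    by (auto simp: returns_def valleys_snoc_False_True)
qed

lemma maj_snoc_False: "maj (xs @ [False]) = maj xs"
  by (simp add: maj_def valleys_snoc_False)

lemma maj_snoc_True_True: "maj (xs @ [True, True]) = maj (xs @ [True])"
  by (simp add: maj_def valleys_snoc_True_True)

lemma maj_snoc_False_True: "maj (xs @ [False, True]) = maj xs + Suc (length xs)"
proof -
  have "Suc (length xs) \<notin> valleys xs"
    using valleys_subset[of xs] by auto
  then show ?thesis
    by (simp add: maj_def valleys_snoc_False_True finite_valleys)
qed

definition markings :: "'a set \<Rightarrow> nat \<Rightarrow> 'a set set" where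
  "markings R r = {M. M \<subseteq> R \<and> r \<le> card M}"

lemma finite_markings: "finite R \<Longrightarrow> finite (markings R r)"
  unfolding markings_def by (rule finite_subset[of _ "Pow R"]) auto

lemma markings_empty: "markings {} r = (if r = 0 then {{}} else {})"
  by (auto simp: markings_def)

lemma sum_markings_insert:
  assumes R: "finite R" and n: "n \<notin> R"
  shows "(\<Sum>M\<in>markings (insert n R) r. f M)
    = (\<Sum>M\<in>markings R r. f M) + (\<Sum>M\<in>markings R (r - 1). f (insert n M))"
proof -
  have split: "markings (insert n R) r = markings R r \<union> insert n ` markings R (r - 1)"
  proof (intro equalityI subsetI)
    fix M assume M: "M \<in> markings (insert n R) r"
    then have "finite M" using R by (auto simp: markings_def intro: finite_subset)
    with M n show "M \<in> markings R r \<union> insert n ` markings R (r - 1)"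
      by (cases "n \<in> M") (auto simp: markings_def card_Diff_singleton intro!: image_eqI[of M _ "M - {n}"])
  next
    fix M assume "M \<in> markings R r \<union> insert n ` markings R (r - 1)"
    with R n show "M \<in> markings (insert n R) r"
      by (auto simp: markings_def card_insert_if finite_subset subset_eq)
  qed
  have "inj_on (insert n) (markings R (r - 1))"
    using n by (auto simp: inj_on_def markings_def)
  moreover have "markings R r \<inter> insert n ` markings R (r - 1) = {}"
    using n by (auto simp: markings_def)
  ultimately show ?thesis
    unfolding split using R by (simp add: finite_markings sum.union_disjoint sum.reindex)
qed

text \<open>A natural-number version of \<open>vmr\<close>; the subtraction does not truncate when the marked
  points are returns (\<open>vmr_eq_marked_weight\<close>).\<close>

definition marked_weight :: "bool list \<Rightarrow> nat set \<Rightarrow> nat" where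
  "marked_weight xs M = maj xs - (\<Sum>x\<in>M. x div 2)"

lemma sum_half_returns_le_maj: "M \<subseteq> returns xs \<Longrightarrow> (\<Sum>x\<in>M. x div 2) \<le> maj xs"
proof -
  assume M: "M \<subseteq> returns xs"
  have "(\<Sum>x\<in>M. x div 2) \<le> (\<Sum>x\<in>M. x)"
    by (rule sum_mono) simp
  also have "\<dots> \<le> (\<Sum>x\<in>valleys xs. x)"
    using M returns_subset_valleys by (intro sum_mono2[OF finite_valleys]) auto
  finally show ?thesis by (simp add: maj_def)
qed

lemma vmr_eq_marked_weight: "M \<subseteq> returns xs \<Longrightarrow> vmr (xs, M) = int (marked_weight xs M)"
  using sum_half_returns_le_maj[of M xs] by (simp add: vmr_def marked_weight_def of_nat_diff)

lemma marked_weight_snoc_False_True: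
  "M \<subseteq> returns xs \<Longrightarrow> marked_weight (xs @ [False, True]) M = marked_weight xs M + Suc (length xs)"
  using sum_half_returns_le_maj[of M xs] by (simp add: marked_weight_def maj_snoc_False_True)

lemma marked_weight_mark_return:
  assumes M: "M \<subseteq> returns xs"
  shows "marked_weight (xs @ [False, True]) (insert (Suc (length xs)) M)
    = marked_weight xs M + (Suc (length xs) - Suc (length xs) div 2)"
proof -
  have "finite M" and "Suc (length xs) \<notin> M"
    using M finite_returns returns_subset_valleys valleys_subset finite_subset by fastforce+
  then show ?thesis
    using sum_half_returns_le_maj[OF M] by (simp add: marked_weight_def maj_snoc_False_True)
qed

definition marking_gf :: "'a::comm_semiring_1 \<Rightarrow> bool list \<Rightarrow> nat \<Rightarrow> 'a" where
  "marking_gf q xs r = (\<Sum>M\<in>markings (returns xs) r. q ^ marked_weight xs M)"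

lemma marking_gf_snoc_False: "marking_gf q (xs @ [False]) r = marking_gf q xs r"
  by (simp add: marking_gf_def marked_weight_def returns_snoc_False maj_snoc_False)

lemma marking_gf_snoc_True_True: "marking_gf q (xs @ [True, True]) r = marking_gf q (xs @ [True]) r"
  by (simp add: marking_gf_def marked_weight_def returns_snoc_True_True maj_snoc_True_True)

lemma marking_gf_valley:
  assumes "path_height (xs @ [False]) (Suc (length xs)) \<noteq> 0"
  shows "marking_gf q (xs @ [False, True]) r = q ^ Suc (length xs) * marking_gf q xs r"
  unfolding marking_gf_def sum_distrib_left
  using assms by (intro sum.cong) (auto simp: returns_snoc_False_True markings_def
      marked_weight_snoc_False_True power_add mult_ac)

lemma marking_gf_return:
  assumes "path_height (xs @ [False]) (Suc (length xs)) = 0"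
  shows "marking_gf q (xs @ [False, True]) r
    = q ^ Suc (length xs) * marking_gf q xs r
      + q ^ (Suc (length xs) - Suc (length xs) div 2) * marking_gf q xs (r - 1)"
proof -
  let ?n = "Suc (length xs)"
  have "?n \<notin> returns xs"
    using returns_subset_valleys valleys_subset by fastforce
  then have "marking_gf q (xs @ [False, True]) r
      = (\<Sum>M\<in>markings (returns xs) r. q ^ marked_weight (xs @ [False, True]) M)
      + (\<Sum>M\<in>markings (returns xs) (r - 1). q ^ marked_weight (xs @ [False, True]) (insert ?n M))"
    using assms by (simp add: marking_gf_def returns_snoc_False_True sum_markings_insert finite_returns)
  also have "\<dots> = q ^ ?n * marking_gf q xs r + q ^ (?n - ?n div 2) * marking_gf q xs (r - 1)"
    unfolding marking_gf_def sum_distrib_left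
  proof (intro arg_cong2[where f = "(+)"] sum.cong refl)
    fix M assume "M \<in> markings (returns xs) r"
    then show "q ^ marked_weight (xs @ [False, True]) M = q ^ ?n * q ^ marked_weight xs M"
      by (simp only: markings_def mem_Collect_eq marked_weight_snoc_False_True power_add mult.commute)
  next
    fix M assume "M \<in> markings (returns xs) (r - 1)"
    then show "q ^ marked_weight (xs @ [False, True]) (insert ?n M) = q ^ (?n - ?n div 2) * q ^ marked_weight xs M"
      by (simp only: markings_def mem_Collect_eq marked_weight_mark_return power_add mult.commute)
  qed
  finally show ?thesis .
qed

section \<open>The generating function of marked ballot paths\<close>

definition ballot_gf :: "'a::comm_ring_1 \<Rightarrow> nat \<Rightarrow> nat \<Rightarrow> nat \<Rightarrow> 'a" where
  "ballot_gf q s t r = (\<Sum>xs\<in>ballot_paths s t. marking_gf q xs r)"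

lemma sum_marked_paths_eq_ballot_gf:
  fixes q :: "'a::field"
  shows "(\<Sum>D\<in>marked_paths s t r. q powi vmr D) = ballot_gf q s t r"
proof -
  have "marked_paths s t r = Sigma (ballot_paths s t) (\<lambda>xs. markings (returns xs) r)"
    by (auto simp: marked_paths_def ballot_paths_def markings_def)
  then have "(\<Sum>D\<in>marked_paths s t r. q powi vmr D)
      = (\<Sum>(xs, M)\<in>Sigma (ballot_paths s t) (\<lambda>xs. markings (returns xs) r). q ^ marked_weight xs M)"
    by (auto simp: vmr_eq_marked_weight markings_def intro!: sum.cong)
  also have "\<dots> = ballot_gf q s t r"
    unfolding ballot_gf_def marking_gf_def
    by (rule sum.Sigma[symmetric]) (auto simp: finite_ballot_paths finite_markings finite_returns)
  finally show ?thesis .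
qed

lemma ballot_gf_right_0: "ballot_gf q s 0 r = (if r = 0 then 1 else 0)"
proof -
  have "ballot_paths s 0 = {replicate s True}"
    by (auto simp: ballot_paths_def ballot_path_right_0)
  moreover have "returns (replicate s True) = {}"
    using returns_subset_valleys valleys_replicate_True by blast
  ultimately show ?thesis
    by (simp add: ballot_gf_def marking_gf_def markings_empty marked_weight_def maj_def
        valleys_replicate_True)
qed

lemma ballot_gf_split_last:
  "ballot_gf q (Suc s) (Suc t) r
    = (\<Sum>xs\<in>ballot_paths s (Suc t). marking_gf q (xs @ [True]) r)
      + (if t < Suc s then ballot_gf q (Suc s) t r else 0)"
  unfolding ballot_gf_def
  by (subst sum_split_last[OF finite_ballot_paths Nil_notin_ballot_paths])
    (simp_all add: ballot_paths_snoc_True ballot_paths_snoc_False marking_gf_snoc_False)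

lemma sum_marking_gf_snoc_True:
  assumes "0 < s + t"
  shows "(\<Sum>xs\<in>ballot_paths s t. marking_gf q (xs @ [True]) r) = ballot_gf q s t r
    + (\<Sum>ys | ys @ [False] \<in> ballot_paths s t. marking_gf q (ys @ [False, True]) r - marking_gf q ys r)"
proof -
  let ?growth = "\<lambda>xs. marking_gf q (xs @ [True]) r - marking_gf q xs r"
  have "(\<Sum>xs\<in>ballot_paths s t. marking_gf q (xs @ [True]) r) = ballot_gf q s t r
      + (\<Sum>xs\<in>ballot_paths s t. ?growth xs)"
    by (simp add: ballot_gf_def sum_subtractf)
  also have "(\<Sum>xs\<in>ballot_paths s t. ?growth xs)
      = (\<Sum>ys | ys @ [True] \<in> ballot_paths s t. ?growth (ys @ [True]))
        + (\<Sum>ys | ys @ [False] \<in> ballot_paths s t. ?growth (ys @ [False]))"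
    by (rule sum_split_last[OF finite_ballot_paths Nil_notin_ballot_paths[OF assms]])
  finally show ?thesis
    by (simp add: marking_gf_snoc_True_True marking_gf_snoc_False)
qed

lemma ballot_gf_rec:
  assumes "Suc t < s"
  shows "ballot_gf q (Suc s) (Suc t) r
    = ballot_gf q s (Suc t) r + (q ^ (s + Suc t) - 1) * ballot_gf q s t r + ballot_gf q (Suc s) t r"
proof -
  have "(\<Sum>ys | ys @ [False] \<in> ballot_paths s (Suc t). marking_gf q (ys @ [False, True]) r - marking_gf q ys r)
      = (q ^ (s + Suc t) - 1) * ballot_gf q s t r"
    unfolding ballot_gf_def sum_distrib_left
  proof (rule sum.cong)
    fix ys assume "ys \<in> ballot_paths s t"
    then have ys: "ballot_path s t ys" by (simp add: ballot_paths_def)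
    then have "length ys = s + t" by (simp add: ballot_path_def)
    moreover have "path_height (ys @ [False]) (Suc (length ys)) \<noteq> 0"
      using assms ballot_path_height_snoc_False[OF ys] by simp
    ultimately show "marking_gf q (ys @ [False, True]) r - marking_gf q ys r
        = (q ^ (s + Suc t) - 1) * marking_gf q ys r"
      by (simp add: marking_gf_valley algebra_simps)
  qed (use assms in \<open>simp add: ballot_paths_snoc_False\<close>)
  then show ?thesis
    using ballot_gf_split_last[of q s t r] sum_marking_gf_snoc_True[of s "Suc t" q r] assms
    by simp
qed

lemma ballot_gf_rec_diagonal:
  "ballot_gf q (Suc (Suc u)) (Suc u) r
    = q ^ (2 * Suc u) * ballot_gf q (Suc u) u r + q ^ Suc u * ballot_gf q (Suc u) u (r - 1)
      + ballot_gf q (Suc (Suc u)) u r"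
proof -
  have "(\<Sum>ys | ys @ [False] \<in> ballot_paths (Suc u) (Suc u).
          marking_gf q (ys @ [False, True]) r - marking_gf q ys r)
      = (q ^ (2 * Suc u) - 1) * ballot_gf q (Suc u) u r + q ^ Suc u * ballot_gf q (Suc u) u (r - 1)"
    unfolding ballot_gf_def sum_distrib_left sum.distrib[symmetric]
  proof (rule sum.cong)
    fix ys assume "ys \<in> ballot_paths (Suc u) u"
    then have ys: "ballot_path (Suc u) u ys" by (simp add: ballot_paths_def)
    then have "length ys = Suc (2 * u)" by (simp add: ballot_path_def)
    moreover have "path_height (ys @ [False]) (Suc (length ys)) = 0"
      using ballot_path_height_snoc_False[OF ys] by simp
    ultimately show "marking_gf q (ys @ [False, True]) r - marking_gf q ys r
        = (q ^ (2 * Suc u) - 1) * marking_gf q ys r + q ^ Suc u * marking_gf q ys (r - 1)"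
      by (simp add: marking_gf_return algebra_simps)
  qed (simp add: ballot_paths_snoc_False)
  moreover have "ballot_gf q (Suc u) (Suc u) r = ballot_gf q (Suc u) u r"
    using ballot_gf_split_last[of q u u r] by (simp add: ballot_paths_empty)
  ultimately show ?thesis
    using ballot_gf_split_last[of q "Suc u" u r] sum_marking_gf_snoc_True[of "Suc u" "Suc u" q r]
    by (simp add: algebra_simps)
qed

lemma ballot_gf_eq_formula:
  fixes q :: "'a::field"
  assumes q: "\<forall>n>0. q ^ n \<noteq> 1"
  shows "t < s \<Longrightarrow> ballot_gf q s t r = ballot_formula q s t r"
proof (induction "s + t" arbitrary: s t r rule: less_induct)
  case less
  show ?case
  proof (cases t)
    case 0
    then show ?thesis
      by (simp add: ballot_gf_right_0 ballot_formula_right_0[OF q])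
  next
    case (Suc t')
    then obtain s' where s: "s = Suc s'" and "t' < s'"
      using less.prems by (cases s) auto
    show ?thesis
    proof (cases "Suc t' < s'")
      case True
      then show ?thesis
        using less.hyps[of s' "Suc t'"] less.hyps[of s' t'] less.hyps[of "Suc s'" t']
        by (simp add: s Suc ballot_gf_rec ballot_formula_rec[OF q])
    next
      case False
      with \<open>t' < s'\<close> have "s' = Suc t'" by simp
      then show ?thesis
        using less.hyps[of "Suc t'" t'] less.hyps[of "Suc (Suc t')" t']
        by (simp add: s Suc ballot_gf_rec_diagonal ballot_formula_rec_diagonal[OF q])
    qed
  qed
qed

theorem lemma2p1:
  fixes s t r :: nat and q :: complex
  assumes "t < s"
    and "\<forall>n>0. q ^ n \<noteq> 1"
  shows "(\<Sum>D\<in>marked_paths s t r. q powi vmr D) = q ^ ((r + 1) choose 2) * qbinom q (s + t) (s + r)"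
  unfolding sum_marked_paths_eq_ballot_gf ballot_gf_eq_formula[OF assms(2,1)] ballot_formula_def ..

end
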